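(* Let $f\colon\mathbb{R}^n\to\mathbb{R}$ be a strictly convex quadratic function, i.e. $f(x)=\tfrac12 x^TAx+b^Tx+c$ with $A$ symmetric positive definite, and let $x\in\mathbb{R}^n$ with $g=\nabla f(x)\neq 0$. For any initial symmetric positive definite matrix $H$, the procedure "while $f(x-Hg)\ge f(x)$, replace $H$ by its unit-step BFGS update at $x$" terminates after finitely many iterations.
   Context: For a $\mathcal{C}^1$-smooth convex $f\colon\mathbb{R}^n\to\mathbb{R}$, a point $x$ with $g=\nabla f(x)$, and a symmetric positive definite $H$, the unit-step BFGS update $H_+$ is: $s=-Hg$, $x_+=x+s$, $g_+=\nabla f(x_+)$, $y=g_+-g$, $V=I-\frac{sy^T}{s^Ty}$, $H_+=VHV^T+\frac{ss^T}{s^Ty}$ (defined when $s^Ty\ne0$, which holds automatically for strictly convex $f$ and $g\neq 0$). The point $x$ (and hence $g$) remains fixed during the procedure. *)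

theory Defs
  imports "HOL-Analysis.Analysis"
begin

definition outer_prod :: "real^'n \<Rightarrow> real^'n \<Rightarrow> real^'n^'n" where
  "outer_prod u v = (\<chi> i j. u $ i * v $ j)"

definition sym_pos_def :: "real^'n^'n \<Rightarrow> bool" where
  "sym_pos_def M \<longleftrightarrow> transpose M = M \<and> (\<forall>v. v \<noteq> 0 \<longrightarrow> 0 < v \<bullet> (M *v v))"

definition bfgs_update :: "(real^'n \<Rightarrow> real^'n) \<Rightarrow> real^'n \<Rightarrow> real^'n^'n \<Rightarrow> real^'n^'n" where
  "bfgs_update gradf x H =
    (let g = gradf x;
         s = - (H *v g);
         y = gradf (x + s) - g;
         V = mat 1 - (1 / (s \<bullet> y)) *\<^sub>R outer_prod s y
     in V ** H ** transpose V + (1 / (s \<bullet> y)) *\<^sub>R outer_prod s s)"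

end

theory Submission
  imports Defs
begin

(*
  The potential trace (A H) drops by at least one at every failed step.  With s = -H g and
  y = A s, the congruence V^T A V = A - y y^T / s^T y gives
  trace (A H_+) = trace (A H) - y^T H y / s^T y + 1.  A failed step means s^T A s >= 2 g^T H g,
  and Cauchy-Schwarz in the inner product of H, applied to y^T H g = -s^T y, turns this into
  y^T H y >= 2 s^T y.  Since BFGS preserves positive definiteness and trace (A M) >= 0 for
  positive semidefinite A and M, only finitely many steps can fail.
*)

lemma outer_prod_mulv: "outer_prod u v *v w = (v \<bullet> w) *\<^sub>R u"
  by (simp add: vec_eq_iff outer_prod_def matrix_vector_mult_def inner_vec_def sum_distrib_left mult_ac)

lemma transpose_outer_prod: "transpose (outer_prod u v) = outer_prod v u"
  by (simp add: vec_eq_iff outer_prod_def transpose_def)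

lemma matrix_mul_outer_prod: "M ** outer_prod u v = outer_prod (M *v u) v"
  by (simp add: vec_eq_iff outer_prod_def matrix_matrix_mult_def matrix_vector_mult_def
      sum_distrib_left sum_distrib_right mult_ac)

lemma outer_prod_matrix_mul: "outer_prod u v ** M = outer_prod u (transpose M *v v)"
  by (simp add: vec_eq_iff outer_prod_def matrix_matrix_mult_def matrix_vector_mult_def
      transpose_def sum_distrib_left mult_ac)

lemma trace_outer_prod: "trace (outer_prod u v) = u \<bullet> v"
  by (simp add: trace_def outer_prod_def inner_vec_def)

lemma trace_scaleR: "trace (c *\<^sub>R M) = c * trace M"
  by (simp add: trace_def sum_distrib_left)

lemma matrix_diff_ldistrib: "A ** (B - C) = A ** B - A ** (C :: 'a::ring_1^'n^'m)"
  by (vector matrix_matrix_mult_def sum_subtractf[symmetric] algebra_simps)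

lemma matrix_diff_rdistrib: "(B - C) ** A = B ** A - C ** (A :: 'a::ring_1^'n^'m)"
  by (vector matrix_matrix_mult_def sum_subtractf[symmetric] algebra_simps)

lemma transpose_diff: "transpose (A - B) = transpose A - transpose (B :: 'a::ab_group_add^'n^'m)"
  by (simp add: vec_eq_iff transpose_def)

lemma transpose_add: "transpose (A + B) = transpose A + transpose (B :: 'a::ab_group_add^'n^'m)"
  by (simp add: vec_eq_iff transpose_def)

lemma inner_symmetric_matrix_commute:
  "transpose M = M \<Longrightarrow> u \<bullet> (M *v v) = v \<bullet> (M *v (u :: real^'n))"
  by (metis dot_lmul_matrix inner_commute transpose_matrix_vector)

lemma quadratic_form_diff_scaleR:
  assumes "transpose M = (M :: real^'n^'n)"
  shows "(u - t *\<^sub>R v) \<bullet> (M *v (u - t *\<^sub>R v)) =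
    u \<bullet> (M *v u) - 2 * t * (u \<bullet> (M *v v)) + t\<^sup>2 * (v \<bullet> (M *v v))"
  using inner_symmetric_matrix_commute[OF assms, of v u]
  by (simp add: algebra_simps inner_diff_left inner_diff_right power2_eq_square
      matrix_vector_mult_diff_distrib matrix_vector_mult_scaleR)

lemma sym_pos_def_psd: "sym_pos_def M \<Longrightarrow> 0 \<le> w \<bullet> (M *v w)"
  unfolding sym_pos_def_def by (cases "w = 0") (auto intro: less_imp_le)

lemma nonneg_quadratic_discrim_le:
  fixes a b c :: real
  assumes nonneg: "\<And>t. 0 \<le> a - 2 * t * b + t\<^sup>2 * c" and "0 \<le> c"
  shows "b\<^sup>2 \<le> a * c"
proof (cases "c = 0")
  case True
  have "b = 0"
  proof (rule ccontr)
    assume "b \<noteq> 0"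
    then have "a - 2 * ((a + 1) / (2 * b)) * b = -1" by (simp add: field_simps)
    with nonneg[of "(a + 1) / (2 * b)"] True show False by simp
  qed
  with True show ?thesis by simp
next
  case False
  with \<open>0 \<le> c\<close> have "0 < c" by simp
  have "0 \<le> a - 2 * (b / c) * b + (b / c)\<^sup>2 * c" by (rule nonneg)
  with \<open>0 < c\<close> show ?thesis by (simp add: power2_eq_square field_simps)
qed

lemma psd_cauchy_schwarz:
  assumes "transpose M = M" and psd: "\<And>w. 0 \<le> w \<bullet> (M *v w)"
  shows "(u \<bullet> (M *v v))\<^sup>2 \<le> (u \<bullet> (M *v u)) * (v \<bullet> (M *v (v :: real^'n)))"
  using psd[of "u - _ *\<^sub>R v"] psd[of v]
  by (intro nonneg_quadratic_discrim_le) (simp_all add: quadratic_form_diff_scaleR[OF assms(1)])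

lemma psd_quadratic_form_eq_0_imp_mulv_eq_0:
  assumes "transpose M = M" "\<And>w. 0 \<le> w \<bullet> (M *v w)" "v \<bullet> (M *v v) = 0"
  shows "M *v v = (0 :: real^'n)"
  using psd_cauchy_schwarz[OF assms(1,2), of "M *v v" v] assms(3) by simp

(* If d = 0 then m = 0 as well, and the junk value 1 / 0 = 0 makes M' = M. *)
lemma psd_rank_one_reduction:
  fixes M :: "real^'n^'n" and e :: "real^'n"
  assumes sym: "transpose M = M" and psd: "\<And>w. 0 \<le> w \<bullet> (M *v w)"
  defines "m \<equiv> M *v e" and "d \<equiv> e \<bullet> (M *v e)"
  defines "M' \<equiv> M - (1 / d) *\<^sub>R outer_prod m m"
  shows "transpose M' = M'" and "0 \<le> w \<bullet> (M' *v w)" and "M' *v e = 0"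
    and "M *v v = 0 \<Longrightarrow> M' *v v = 0"
proof -
  have m_inner: "m \<bullet> w = e \<bullet> (M *v w)" for w
    unfolding m_def using inner_symmetric_matrix_commute[OF sym, of w e] by (simp add: inner_commute)
  have M'_mulv: "M' *v w = M *v w - ((m \<bullet> w) / d) *\<^sub>R m" for w
    unfolding M'_def
    by (simp add: matrix_vector_mult_diff_rdistrib outer_prod_mulv scaleR_matrix_vector_assoc[symmetric])
  show "transpose M' = M'"
    unfolding M'_def transpose_diff transpose_scalar transpose_outer_prod sym ..
  have "(m \<bullet> w)\<^sup>2 \<le> d * (w \<bullet> (M *v w))"
    using psd_cauchy_schwarz[OF sym psd, of e w] unfolding m_inner d_def by (simp add: mult.commute)
  moreover have "0 \<le> d" "0 \<le> w \<bullet> (M *v w)" unfolding d_def by (rule psd)+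
  ultimately have "(m \<bullet> w)\<^sup>2 / d \<le> w \<bullet> (M *v w)"
    by (cases "d = 0") (simp_all add: pos_divide_le_eq mult.commute)
  then show "0 \<le> w \<bullet> (M' *v w)"
    unfolding M'_mulv by (simp add: inner_diff_right power2_eq_square inner_commute[of w m])
  show "M' *v e = 0"
  proof (cases "d = 0")
    case True
    then have "m = 0" unfolding m_def d_def by (rule psd_quadratic_form_eq_0_imp_mulv_eq_0[OF sym psd])
    then show ?thesis by (simp add: M'_mulv m_def)
  next
    case False
    have "m \<bullet> e = d" unfolding m_def d_def by (rule inner_commute)
    with False have "M' *v e = M *v e - m" by (simp add: M'_mulv)
    then show ?thesis by (simp add: m_def)
  qed
  show "M' *v v = 0" if "M *v v = 0"
    using that by (simp add: M'_mulv m_inner)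
qed

(* Peeling off one rank-one term per column is a Cholesky-type decomposition of M. *)
lemma trace_mult_psd_nonneg_aux:
  fixes A M :: "real^'n^'n"
  assumes A_psd: "\<And>w. 0 \<le> w \<bullet> (A *v w)"
  shows "finite S \<Longrightarrow> transpose M = M \<Longrightarrow> (\<forall>w. 0 \<le> w \<bullet> (M *v w)) \<Longrightarrow>
    (\<forall>j. j \<notin> S \<longrightarrow> M *v axis j 1 = 0) \<Longrightarrow> 0 \<le> trace (A ** M)"
proof (induction S arbitrary: M rule: finite_induct)
  case empty
  then have "M = 0"
    by (simp add: vec_eq_iff matrix_vector_mult_basis column_def)
  then show ?case by (simp add: trace_def)
next
  case (insert k S M)
  let ?e = "axis k (1::real)"
  define m where "m = M *v ?e"
  define d where "d = ?e \<bullet> (M *v ?e)"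
  let ?M' = "M - (1 / d) *\<^sub>R outer_prod m m"
  have M_psd: "0 \<le> w \<bullet> (M *v w)" for w using insert.prems(2) by blast
  note reduction = psd_rank_one_reduction[OF insert.prems(1) M_psd, where e = ?e, folded m_def d_def]
  have "?M' *v axis j 1 = 0" if "j \<notin> S" for j
    using that insert.prems(3) reduction(3,4) by (cases "j = k") auto
  with reduction(1,2) have "0 \<le> trace (A ** ?M')" using insert.IH by blast
  moreover have "0 \<le> d" "0 \<le> m \<bullet> (A *v m)" unfolding d_def using M_psd A_psd by auto
  moreover have "trace (A ** M) = trace (A ** ?M') + (1 / d) * (m \<bullet> (A *v m))"
    unfolding matrix_diff_ldistrib trace_sub matrix_scalar_ac scalar_matrix_assoc[symmetric]
      trace_scaleR matrix_mul_outer_prod trace_outer_prod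
    by (simp add: inner_commute scaleR_matrix_vector_assoc[symmetric])
  ultimately show ?case by simp
qed

lemma trace_mult_psd_nonneg:
  fixes A M :: "real^'n^'n"
  assumes "\<And>w. 0 \<le> w \<bullet> (A *v w)" "transpose M = M" "\<And>w. 0 \<le> w \<bullet> (M *v w)"
  shows "0 \<le> trace (A ** M)"
  using trace_mult_psd_nonneg_aux[OF assms(1), of UNIV M] assms(2,3) by simp

definition bfgs_factor :: "real^'n \<Rightarrow> real^'n \<Rightarrow> real^'n^'n" where
  "bfgs_factor s y = mat 1 - (1 / (s \<bullet> y)) *\<^sub>R outer_prod s y"

definition bfgs_formula :: "real^'n^'n \<Rightarrow> real^'n \<Rightarrow> real^'n \<Rightarrow> real^'n^'n" where
  "bfgs_formula H s y =
    bfgs_factor s y ** H ** transpose (bfgs_factor s y) + (1 / (s \<bullet> y)) *\<^sub>R outer_prod s s"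

lemma bfgs_update_eq_bfgs_formula:
  "bfgs_update gradf x H =
    bfgs_formula H (- (H *v gradf x)) (gradf (x - H *v gradf x) - gradf x)"
  by (simp add: bfgs_update_def bfgs_formula_def bfgs_factor_def Let_def)

lemma bfgs_factor_mulv: "bfgs_factor s y *v v = v - ((y \<bullet> v) / (s \<bullet> y)) *\<^sub>R s"
  by (simp add: bfgs_factor_def matrix_vector_mult_diff_rdistrib outer_prod_mulv
      scaleR_matrix_vector_assoc[symmetric])

lemma transpose_bfgs_factor_mulv:
  "transpose (bfgs_factor s y) *v v = v - ((s \<bullet> v) / (s \<bullet> y)) *\<^sub>R y"
  by (simp add: bfgs_factor_def transpose_diff transpose_scalar transpose_outer_prod
      matrix_vector_mult_diff_rdistrib outer_prod_mulv scaleR_matrix_vector_assoc[symmetric])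

lemma sym_pos_def_bfgs_formula:
  assumes H: "sym_pos_def H" and curv: "0 < s \<bullet> y"
  shows "sym_pos_def (bfgs_formula H s y)"
proof -
  let ?V = "bfgs_factor s y"
  have H_sym: "transpose H = H" and H_pd: "\<And>v. v \<noteq> 0 \<Longrightarrow> 0 < v \<bullet> (H *v v)"
    using H unfolding sym_pos_def_def by auto
  have "transpose (?V ** H ** transpose ?V) = ?V ** H ** transpose ?V"
    by (simp add: matrix_transpose_mul H_sym matrix_mul_assoc)
  then have sym: "transpose (bfgs_formula H s y) = bfgs_formula H s y"
    by (simp add: bfgs_formula_def transpose_add transpose_scalar transpose_outer_prod)
  have quad: "v \<bullet> (bfgs_formula H s y *v v) =
      (transpose ?V *v v) \<bullet> (H *v (transpose ?V *v v)) + (s \<bullet> v)\<^sup>2 / (s \<bullet> y)" for v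
    by (simp add: bfgs_formula_def matrix_vector_mult_add_rdistrib inner_add_right
        matrix_vector_mul_assoc[symmetric] dot_lmul_matrix[symmetric] transpose_matrix_vector
        scaleR_matrix_vector_assoc[symmetric] outer_prod_mulv power2_eq_square inner_commute)
  have "0 < v \<bullet> (bfgs_formula H s y *v v)" if "v \<noteq> 0" for v
  proof (cases "s \<bullet> v = 0")
    case True
    then show ?thesis using H_pd[OF that] unfolding quad transpose_bfgs_factor_mulv by simp
  next
    case False
    have "0 \<le> (transpose ?V *v v) \<bullet> (H *v (transpose ?V *v v))"
      using H by (rule sym_pos_def_psd)
    with False curv show ?thesis by (simp add: quad add_nonneg_pos)
  qed
  with sym show ?thesis unfolding sym_pos_def_def by blast
qed

lemma bfgs_factor_congruence:
  assumes A_sym: "transpose A = A" and y: "A *v s = y"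
  shows "transpose (bfgs_factor s y) ** A ** bfgs_factor s y = A - (1 / (s \<bullet> y)) *\<^sub>R outer_prod y y"
proof (rule matrix_eq[THEN iffD2], intro allI)
  fix v
  let ?w = "A *v v - ((y \<bullet> v) / (s \<bullet> y)) *\<^sub>R y"
  have "s \<bullet> (A *v v) = y \<bullet> v"
    using inner_symmetric_matrix_commute[OF A_sym, of s v] y by (simp add: inner_commute)
  then have "(s \<bullet> ?w) / (s \<bullet> y) = 0"
    by (cases "s \<bullet> y = 0") (simp_all add: inner_diff_right)
  then have "transpose (bfgs_factor s y) *v ?w = ?w"
    unfolding transpose_bfgs_factor_mulv by simp
  moreover have "A *v (bfgs_factor s y *v v) = ?w"
    unfolding bfgs_factor_mulv by (simp add: matrix_vector_mult_diff_distrib matrix_vector_mult_scaleR y)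
  ultimately show "(transpose (bfgs_factor s y) ** A ** bfgs_factor s y) *v v =
      (A - (1 / (s \<bullet> y)) *\<^sub>R outer_prod y y) *v v"
    by (simp add: matrix_vector_mul_assoc[symmetric] matrix_vector_mult_diff_rdistrib
        scaleR_matrix_vector_assoc[symmetric] outer_prod_mulv)
qed

lemma trace_bfgs_formula:
  assumes A_sym: "transpose A = A" and H_sym: "transpose H = H"
    and y: "A *v s = y" and curv: "s \<bullet> y \<noteq> 0"
  shows "trace (A ** bfgs_formula H s y) = trace (A ** H) - (y \<bullet> (H *v y)) / (s \<bullet> y) + 1"
proof -
  let ?V = "bfgs_factor s y"
  have "trace (A ** (?V ** H ** transpose ?V)) = trace ((transpose ?V ** A ** ?V) ** H)"
    by (metis matrix_mul_assoc trace_mul_sym)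
  also have "\<dots> = trace (A ** H) - (y \<bullet> (H *v y)) / (s \<bullet> y)"
    by (simp add: bfgs_factor_congruence[OF A_sym y] matrix_diff_rdistrib trace_sub
        scalar_matrix_assoc[symmetric] trace_scaleR outer_prod_matrix_mul trace_outer_prod H_sym)
  finally show ?thesis
    using curv y
    by (simp add: bfgs_formula_def matrix_add_ldistrib trace_add matrix_scalar_ac
        scalar_matrix_assoc[symmetric] trace_scaleR matrix_mul_outer_prod trace_outer_prod
        scaleR_matrix_vector_assoc[symmetric] inner_commute)
qed

lemma quadratic_gradient:
  fixes f :: "real^'n \<Rightarrow> real" and A :: "real^'n^'n"
  assumes A_sym: "transpose A = A"
    and f_quad: "\<And>z. f z = 1/2 * (z \<bullet> (A *v z)) + b \<bullet> z + c"
    and grad: "\<And>z. (f has_derivative (\<lambda>h. gradf z \<bullet> h)) (at z)"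
  shows "gradf z = A *v z + b"
proof -
  have "((\<lambda>z. 1/2 * (z \<bullet> (A *v z)) + b \<bullet> z + c) has_derivative
      (\<lambda>h. 1/2 * (h \<bullet> (A *v z) + z \<bullet> (A *v h)) + b \<bullet> h)) (at z)"
    by (auto intro!: derivative_eq_intros linear_imp_has_derivative simp: matrix_vector_mul_linear)
  moreover have "1/2 * (h \<bullet> (A *v z) + z \<bullet> (A *v h)) + b \<bullet> h = (A *v z + b) \<bullet> h" for h
    using inner_symmetric_matrix_commute[OF A_sym, of z h]
    by (simp add: inner_add_left inner_commute[of b h] inner_commute[of "A *v z" h])
  moreover have "f = (\<lambda>z. 1/2 * (z \<bullet> (A *v z)) + b \<bullet> z + c)"
    using f_quad by blast
  ultimately have "(f has_derivative (\<lambda>h. (A *v z + b) \<bullet> h)) (at z)"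
    by simp
  then have "(\<lambda>h. gradf z \<bullet> h) = (\<lambda>h. (A *v z + b) \<bullet> h)"
    by (rule has_derivative_unique[OF grad])
  then show ?thesis by (metis vector_eq_rdot)
qed

lemma quadratic_add:
  fixes f :: "real^'n \<Rightarrow> real" and A :: "real^'n^'n"
  assumes A_sym: "transpose A = A"
    and f_quad: "\<And>z. f z = 1/2 * (z \<bullet> (A *v z)) + b \<bullet> z + c"
  shows "f (x + s) = f x + (A *v x + b) \<bullet> s + (s \<bullet> (A *v s)) / 2"
  using inner_symmetric_matrix_commute[OF A_sym, of x s]
  by (simp add: f_quad matrix_vector_right_distrib inner_add_left inner_add_right
      inner_commute field_simps)

lemma failed_step_curvature:
  fixes f :: "real^'n \<Rightarrow> real" and A H :: "real^'n^'n"
  assumes A_sym: "transpose A = A"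
    and f_quad: "\<And>z. f z = 1/2 * (z \<bullet> (A *v z)) + b \<bullet> z + c"
    and H_sym: "transpose H = H" and H_psd: "\<And>w. 0 \<le> w \<bullet> (H *v w)"
    and s: "s = - (H *v (A *v x + b))" and curv: "0 < s \<bullet> (A *v s)"
    and fail: "f x \<le> f (x + s)"
  shows "2 * (s \<bullet> (A *v s)) \<le> (A *v s) \<bullet> (H *v (A *v s))"
proof -
  define g where "g = A *v x + b"
  define \<sigma> where "\<sigma> = s \<bullet> (A *v s)"
  define a where "a = g \<bullet> (H *v g)"
  define q where "q = (A *v s) \<bullet> (H *v (A *v s))"
  have "f (x + s) = f x - a + \<sigma> / 2"
    using quadratic_add[OF A_sym f_quad, of x s] by (simp add: s g_def a_def \<sigma>_def)
  with fail have "2 * a \<le> \<sigma>" by simp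
  have "(A *v s) \<bullet> (H *v g) = - \<sigma>"
    by (simp add: s g_def \<sigma>_def inner_commute)
  then have "\<sigma>\<^sup>2 \<le> q * a"
    using psd_cauchy_schwarz[OF H_sym H_psd, of "A *v s" g] by (simp add: q_def a_def)
  have "0 < \<sigma>" "0 \<le> a" using curv H_psd by (simp_all add: \<sigma>_def a_def)
  have "0 < a"
    using \<open>\<sigma>\<^sup>2 \<le> q * a\<close> \<open>0 < \<sigma>\<close> \<open>0 \<le> a\<close> by (cases "a = 0") auto
  have "\<sigma> * (2 * a) \<le> \<sigma> * \<sigma>"
    using \<open>2 * a \<le> \<sigma>\<close> \<open>0 < \<sigma>\<close> by (intro mult_left_mono) auto
  with \<open>\<sigma>\<^sup>2 \<le> q * a\<close> have "(2 * \<sigma>) * a \<le> q * a"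
    by (simp add: power2_eq_square algebra_simps)
  with \<open>0 < a\<close> have "2 * \<sigma> \<le> q" by simp
  then show ?thesis by (simp add: q_def \<sigma>_def)
qed

lemma bfgs_update_failed_step:
  fixes f :: "real^'n \<Rightarrow> real" and A G :: "real^'n^'n"
  assumes A_spd: "sym_pos_def A"
    and f_quad: "\<And>z. f z = 1/2 * (z \<bullet> (A *v z)) + b \<bullet> z + c"
    and gradf: "\<And>z. gradf z = A *v z + b"
    and g_nz: "gradf x \<noteq> 0"
    and G_spd: "sym_pos_def G"
    and fail: "f x \<le> f (x - G *v gradf x)"
  shows "sym_pos_def (bfgs_update gradf x G)"
    and "trace (A ** bfgs_update gradf x G) \<le> trace (A ** G) - 1"
proof -
  define s where "s = - (G *v gradf x)"
  define y where "y = A *v s"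
  have A_sym: "transpose A = A" and A_pd: "\<And>v. v \<noteq> 0 \<Longrightarrow> 0 < v \<bullet> (A *v v)"
    using A_spd unfolding sym_pos_def_def by auto
  have G_sym: "transpose G = G" and G_pd: "\<And>v. v \<noteq> 0 \<Longrightarrow> 0 < v \<bullet> (G *v v)"
    using G_spd unfolding sym_pos_def_def by auto
  have G_psd: "0 \<le> v \<bullet> (G *v v)" for v
    using G_spd by (rule sym_pos_def_psd)
  have "s \<noteq> 0"
    using G_pd[OF g_nz] unfolding s_def by auto
  then have curv: "0 < s \<bullet> y"
    unfolding y_def by (rule A_pd)
  have "gradf (x - G *v gradf x) - gradf x = y"
    unfolding y_def s_def gradf
    by (simp add: matrix_vector_mult_diff_distrib matrix_vector_mult_diff_distrib[of _ 0, simplified])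
  then have update: "bfgs_update gradf x G = bfgs_formula G s y"
    by (simp add: bfgs_update_eq_bfgs_formula s_def)
  show "sym_pos_def (bfgs_update gradf x G)"
    unfolding update using sym_pos_def_bfgs_formula[OF G_spd curv] .
  have "2 * (s \<bullet> y) \<le> y \<bullet> (G *v y)"
    using failed_step_curvature[OF A_sym f_quad G_sym G_psd _ _ fail[unfolded diff_conv_add_uminus]]
      curv
    by (simp add: s_def y_def gradf)
  with curv have "1 \<le> (y \<bullet> (G *v y)) / (s \<bullet> y) - 1"
    by (simp add: field_simps)
  then show "trace (A ** bfgs_update gradf x G) \<le> trace (A ** G) - 1"
    unfolding update trace_bfgs_formula[OF A_sym G_sym y_def[symmetric] curv[THEN less_imp_neq, symmetric]]
    by simp
qed

theorem mainTheorem4: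
  fixes f :: "real^'n \<Rightarrow> real" and gradf :: "real^'n \<Rightarrow> real^'n"
    and A H :: "real^'n^'n" and b x :: "real^'n" and c :: real
  assumes A_spd: "sym_pos_def A"
    and f_quad: "\<And>z. f z = 1/2 * (z \<bullet> (A *v z)) + b \<bullet> z + c"
    and grad: "\<And>z. (f has_derivative (\<lambda>h. gradf z \<bullet> h)) (at z)"
    and g_nz: "gradf x \<noteq> 0"
    and H_spd: "sym_pos_def H"
  shows "\<exists>k. f (x - ((bfgs_update gradf x ^^ k) H) *v gradf x) < f x"
proof (rule ccontr)
  let ?H = "\<lambda>k. (bfgs_update gradf x ^^ k) H"
  assume "\<not> ?thesis"
  then have fail: "f x \<le> f (x - ?H k *v gradf x)" for k by (simp add: not_less)
  have A_sym: "transpose A = A" and A_psd: "\<And>w. 0 \<le> w \<bullet> (A *v w)"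
    using A_spd sym_pos_def_psd unfolding sym_pos_def_def by auto
  note step = bfgs_update_failed_step[OF A_spd f_quad quadratic_gradient[OF A_sym f_quad grad] g_nz]
  have H_k: "sym_pos_def (?H k) \<and> trace (A ** ?H k) \<le> trace (A ** H) - real k" for k
  proof (induction k)
    case 0
    show ?case using H_spd by simp
  next
    case (Suc k)
    then show ?case using step[of "?H k"] fail[of k] by auto
  qed
  define k where "k = nat \<lceil>trace (A ** H)\<rceil> + 1"
  have "0 \<le> trace (A ** ?H k)"
    using H_k[of k] sym_pos_def_psd
    by (intro trace_mult_psd_nonneg[OF A_psd]) (auto simp: sym_pos_def_def)
  moreover have "trace (A ** H) - real k < 0"
    unfolding k_def by linarith
  ultimately show False
    using H_k[of k] by linarith
qed

end
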